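(* Let $P,Q$ be distributions over $x=(x_1,\dots,x_d)\in\mathbb{R}^d$ such that under both $P$ and $Q$ every coordinate $x_i$ has law $\mathcal{N}(0,1)$ and every pair $(x_i,x_j)$ is two-dimensional Gaussian. Let $\Sigma_P=\mathbb{E}_P[xx^\top]$, $\Sigma_Q=\mathbb{E}_Q[xx^\top]$, and $\mathcal{F}=\{\sum_{i=1}^d f_i(x_i): \mathbb{E}_P[f_i(x_i)^2]<\infty\ \forall i\}$. Then $$\tau(P,Q,\mathcal{F})\le \sup_{n\ge 0}\ \sup_{v\in\mathbb{R}^d}\frac{v^\top \Sigma_Q^{\odot n}v}{v^\top \Sigma_P^{\odot n}v}.$$
   Context: $\tau(P,Q,\mathcal{F})=\sup_{f,g\in\mathcal{F}}\mathbb{E}_Q[(f(x)-g(x))^2]/\mathbb{E}_P[(f(x)-g(x))^2]$ with convention $0/0=0$ (same convention in the right-hand ratio). For a matrix $M$, $M^{\odot n}$ is the entrywise $n$-th power, $[M^{\odot n}]_{i,j}=([M]_{i,j})^n$ (so $M^{\odot 0}$ is the all-ones matrix). *)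

theory Defs
  imports "HOL-Probability.Probability"
begin

definition gaussian_rv :: "'a measure \<Rightarrow> ('a \<Rightarrow> real) \<Rightarrow> bool" where
  "gaussian_rv M X \<longleftrightarrow> X \<in> borel_measurable M \<and>
     (\<exists>\<mu> \<sigma>. (\<sigma> = 0 \<and> (AE x in M. X x = \<mu>)) \<or>
             (\<sigma> > 0 \<and> distributed M lborel X (normal_density \<mu> \<sigma>)))"

text \<open>Two real random variables are jointly (two-dimensional) Gaussian iff every
  linear combination of them is Gaussian (Cramer-Wold characterisation).\<close>
definition jointly_gaussian :: "'a measure \<Rightarrow> ('a \<Rightarrow> real) \<Rightarrow> ('a \<Rightarrow> real) \<Rightarrow> bool" where
  "jointly_gaussian M X Y \<longleftrightarrow> (\<forall>a b. gaussian_rv M (\<lambda>x. a * X x + b * Y x))"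

definition second_moment :: "(real^'d) measure \<Rightarrow> 'd \<Rightarrow> 'd \<Rightarrow> real" where
  "second_moment M i j = (\<integral>x. x$i * x$j \<partial>M)"

definition hadamard_pow :: "('d \<Rightarrow> 'd \<Rightarrow> real) \<Rightarrow> nat \<Rightarrow> 'd \<Rightarrow> 'd \<Rightarrow> real" where
  "hadamard_pow A n i j = (A i j) ^ n"

definition quad_form :: "('d::finite \<Rightarrow> 'd \<Rightarrow> real) \<Rightarrow> real^'d \<Rightarrow> real" where
  "quad_form A v = (\<Sum>i\<in>UNIV. \<Sum>j\<in>UNIV. v$i * A i j * v$j)"

definition ratio0 :: "ennreal \<Rightarrow> ennreal \<Rightarrow> ennreal" where
  "ratio0 a b = (if a = 0 then 0 else if b = 0 then \<top> else a / b)"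

definition tau :: "'a measure \<Rightarrow> 'a measure \<Rightarrow> ('a \<Rightarrow> real) set \<Rightarrow> ennreal" where
  "tau P Q F = (SUP f\<in>F. SUP g\<in>F.
      ratio0 (\<integral>\<^sup>+x. ennreal ((f x - g x)^2) \<partial>Q) (\<integral>\<^sup>+x. ennreal ((f x - g x)^2) \<partial>P))"

definition additive_class :: "(real^'d::finite) measure \<Rightarrow> (real^'d \<Rightarrow> real) set" where
  "additive_class P = {(\<lambda>x. \<Sum>i\<in>UNIV. fs i (x$i)) | fs.
      (\<forall>i. fs i \<in> borel_measurable borel \<and> (\<integral>\<^sup>+x. ennreal ((fs i (x$i))^2) \<partial>P) < \<top>)}"

end

theory Submission
  imports Defs
begin

text \<open>
  For a standard Gaussian pair \<open>(x, y)\<close> with correlation \<open>\<rho>\<close>, the characteristic function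
  \<open>E[exp(i(s x + t y))] = exp(-(s\<^sup>2 + t\<^sup>2 + 2\<rho> s t)/2)\<close> shows that for trigonometric polynomials
  \<open>u\<close>, \<open>v\<close> the mixed moment \<open>E[u(x) v(y)]\<close> is a power series \<open>\<Sum>\<^sub>n \<rho>\<^sup>n/n! \<beta>\<^sub>n(u) \<beta>\<^sub>n(v)\<close>
  whose coefficients depend only on \<open>u\<close> and \<open>v\<close>. Hence for an additive trigonometric function
  \<open>T(x) = \<Sum>\<^sub>i T\<^sub>i(x\<^sub>i)\<close> one gets \<open>E[T\<^sup>2] = \<Sum>\<^sub>n 1/n! \<beta>\<^sub>n\<^sup>T \<Sigma>\<^sup>\<odot>\<^sup>n \<beta>\<^sub>n\<close> under both \<open>P\<close> and
  \<open>Q\<close>, and the bound follows by comparing the two series termwise (all terms are nonnegative by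
  the Schur product theorem). Trigonometric polynomials are dense in \<open>L\<^sup>2(N(0,1))\<close>, and since
  every coordinate is standard normal under both measures, approximating the components of an
  additive function approximates it simultaneously in \<open>L\<^sup>2(P)\<close> and \<open>L\<^sup>2(Q)\<close>.
\<close>

section \<open>Trigonometric polynomials\<close>

fun trig_term :: "real \<times> real \<times> real \<Rightarrow> real \<Rightarrow> real" where
  "trig_term (a, b, \<omega>) x = a * cos (\<omega> * x) + b * sin (\<omega> * x)"

definition trig_poly :: "(real \<times> real \<times> real) list \<Rightarrow> real \<Rightarrow> real" where
  "trig_poly L x = (\<Sum>p\<leftarrow>L. trig_term p x)"

lemma trig_poly_simps [simp]:
  "trig_poly [] x = 0"
  "trig_poly (p # L) x = trig_term p x + trig_poly L x"
  "trig_poly (L1 @ L2) x = trig_poly L1 x + trig_poly L2 x"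
  by (simp_all add: trig_poly_def)

fun trig_term_prod :: "real \<times> real \<times> real \<Rightarrow> real \<times> real \<times> real \<Rightarrow> (real \<times> real \<times> real) list" where
  "trig_term_prod (a, b, s) (c, d, t) =
     [((a*c + b*d) / 2, (b*c - a*d) / 2, s - t), ((a*c - b*d) / 2, (a*d + b*c) / 2, s + t)]"

lemma trig_term_mult: "trig_term p x * trig_term q x = trig_poly (trig_term_prod p q) x"
  by (cases p; cases q)
    (simp add: cos_add sin_add cos_diff sin_diff algebra_simps add_divide_distrib diff_divide_distrib)

definition trig_poly_prod :: "(real \<times> real \<times> real) list \<Rightarrow> (real \<times> real \<times> real) list \<Rightarrow> (real \<times> real \<times> real) list" where
  "trig_poly_prod L1 L2 = concat (map (\<lambda>p. concat (map (trig_term_prod p) L2)) L1)"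

lemma trig_poly_mult: "trig_poly L1 x * trig_poly L2 x = trig_poly (trig_poly_prod L1 L2) x"
proof -
  have "trig_term p x * trig_poly L2 x = trig_poly (concat (map (trig_term_prod p) L2)) x" for p
    by (induction L2) (auto simp: distrib_left trig_term_mult)
  then show ?thesis
    unfolding trig_poly_prod_def by (induction L1) (auto simp: distrib_right)
qed

definition trig_poly_scale :: "real \<Rightarrow> (real \<times> real \<times> real) list \<Rightarrow> (real \<times> real \<times> real) list" where
  "trig_poly_scale c L = map (\<lambda>(a, b, \<omega>). (c * a, c * b, \<omega>)) L"

lemma trig_poly_scale: "trig_poly (trig_poly_scale c L) x = c * trig_poly L x"
  unfolding trig_poly_scale_def by (induction L) (auto simp: algebra_simps)

lemma trig_poly_of_polynomial_sin:
  assumes "real_polynomial_function p"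
  shows "\<exists>L. \<forall>x. p (sin (\<omega> * x)) = trig_poly L x"
  using assms
proof (induction p)
  case (linear f)
  then obtain c where "f = (\<lambda>x. x * c)"
    by (auto simp: real_bounded_linear)
  then show ?case
    by (intro exI[of _ "[(0, c, \<omega>)]"]) auto
next
  case (const c)
  then show ?case
    by (intro exI[of _ "[(c, 0, 0)]"]) auto
next
  case (add f g)
  then obtain L1 L2 where "\<forall>x. f (sin (\<omega> * x)) = trig_poly L1 x" "\<forall>x. g (sin (\<omega> * x)) = trig_poly L2 x"
    by blast
  then show ?case
    by (intro exI[of _ "L1 @ L2"]) auto
next
  case (mult f g)
  then obtain L1 L2 where "\<forall>x. f (sin (\<omega> * x)) = trig_poly L1 x" "\<forall>x. g (sin (\<omega> * x)) = trig_poly L2 x"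
    by blast
  then show ?case
    by (intro exI[of _ "trig_poly_prod L1 L2"]) (auto simp: trig_poly_mult)
qed

lemma abs_trig_poly_le: "\<bar>trig_poly L x\<bar> \<le> (\<Sum>(a, b, \<omega>)\<leftarrow>L. \<bar>a\<bar> + \<bar>b\<bar>)"
proof (induction L)
  case (Cons p L)
  obtain a b \<omega> where p: "p = (a, b, \<omega>)"
    by (cases p)
  have "\<bar>trig_term p x\<bar> \<le> \<bar>a\<bar> + \<bar>b\<bar>"
    unfolding p by (simp add: abs_mult mult_left_le abs_triangle_ineq order_trans[OF abs_triangle_ineq add_mono])
  with Cons show ?case
    unfolding p by (simp add: order_trans[OF abs_triangle_ineq])
qed simp

lemma trig_poly_bounded: "\<exists>B. \<forall>x. \<bar>trig_poly L x\<bar> \<le> B"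
  using abs_trig_poly_le by blast

lemma continuous_on_trig_poly: "continuous_on UNIV (trig_poly L)"
proof (induction L)
  case (Cons p L)
  obtain a b \<omega> where "p = (a, b, \<omega>)"
    by (cases p)
  with Cons show ?case
    by (simp add: fun_eq_iff[symmetric] continuous_on_add) (intro continuous_intros)
qed (simp add: fun_eq_iff[symmetric])

lemma borel_measurable_trig_poly [measurable]: "trig_poly L \<in> borel_measurable borel"
  using continuous_on_trig_poly by (rule borel_measurable_continuous_onI)

section \<open>Density of trigonometric polynomials in \<open>L\<^sup>2\<close> of a real distribution\<close>

lemma power2_lincomb_le: "(a * x + b * y)\<^sup>2 \<le> 2 * a\<^sup>2 * x\<^sup>2 + 2 * b\<^sup>2 * (y::real)\<^sup>2"
proof -
  have "0 \<le> (a * x - b * y)\<^sup>2"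
    by simp
  then show ?thesis
    by (simp add: power2_eq_square algebra_simps)
qed

definition sq_integrable :: "real measure \<Rightarrow> (real \<Rightarrow> real) \<Rightarrow> bool" where
  "sq_integrable M f \<longleftrightarrow> f \<in> borel_measurable borel \<and> integrable M (\<lambda>x. (f x)\<^sup>2)"

definition trig_approximable :: "real measure \<Rightarrow> (real \<Rightarrow> real) \<Rightarrow> bool" where
  "trig_approximable M f \<longleftrightarrow> (\<forall>e>0. \<exists>L. (\<integral>x. (f x - trig_poly L x)\<^sup>2 \<partial>M) < e)"

context real_distribution
begin

lemma sq_integrable_bounded:
  assumes "f \<in> borel_measurable borel" and "\<And>x. \<bar>f x\<bar> \<le> B"
  shows "sq_integrable M f"
  unfolding sq_integrable_def
proof (intro conjI assms)
  have "\<bar>(f x)\<^sup>2\<bar> \<le> B\<^sup>2" for x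
    using assms(2)[of x] abs_le_square_iff[of "f x" B] by auto
  with assms(1) show "integrable M (\<lambda>x. (f x)\<^sup>2)"
    by (intro integrable_const_bound[where B="B\<^sup>2"]) auto
qed

lemma sq_integrable_trig_poly: "sq_integrable M (trig_poly L)"
  using trig_poly_bounded[of L] by (auto intro: sq_integrable_bounded)

lemma sq_integrable_lincomb:
  assumes "sq_integrable M f" and "sq_integrable M g"
  shows "sq_integrable M (\<lambda>x. a * f x + b * g x)"
  unfolding sq_integrable_def
proof
  have [measurable]: "f \<in> borel_measurable borel" "g \<in> borel_measurable borel"
    using assms by (auto simp: sq_integrable_def)
  show "(\<lambda>x. a * f x + b * g x) \<in> borel_measurable borel"
    by measurable
  show "integrable M (\<lambda>x. (a * f x + b * g x)\<^sup>2)"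
  proof (rule Bochner_Integration.integrable_bound)
    show "integrable M (\<lambda>x. 2 * a\<^sup>2 * (f x)\<^sup>2 + 2 * b\<^sup>2 * (g x)\<^sup>2)"
      using assms by (auto simp: sq_integrable_def)
    show "AE x in M. norm ((a * f x + b * g x)\<^sup>2) \<le> norm (2 * a\<^sup>2 * (f x)\<^sup>2 + 2 * b\<^sup>2 * (g x)\<^sup>2)"
      using power2_lincomb_le by simp
  qed measurable
qed

lemma sq_integrable_diff: "sq_integrable M f \<Longrightarrow> sq_integrable M g \<Longrightarrow> sq_integrable M (\<lambda>x. f x - g x)"
  using sq_integrable_lincomb[of f g 1 "-1"] by simp

lemma integral_sq_lincomb_le:
  assumes "sq_integrable M f" and "sq_integrable M g"
  shows "(\<integral>x. (a * f x + b * g x)\<^sup>2 \<partial>M)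
    \<le> 2 * a\<^sup>2 * (\<integral>x. (f x)\<^sup>2 \<partial>M) + 2 * b\<^sup>2 * (\<integral>x. (g x)\<^sup>2 \<partial>M)"
proof -
  have "(\<integral>x. (a * f x + b * g x)\<^sup>2 \<partial>M) \<le> (\<integral>x. 2 * a\<^sup>2 * (f x)\<^sup>2 + 2 * b\<^sup>2 * (g x)\<^sup>2 \<partial>M)"
    using assms sq_integrable_lincomb[OF assms] power2_lincomb_le
    by (intro integral_mono) (auto simp: sq_integrable_def)
  also have "\<dots> = 2 * a\<^sup>2 * (\<integral>x. (f x)\<^sup>2 \<partial>M) + 2 * b\<^sup>2 * (\<integral>x. (g x)\<^sup>2 \<partial>M)"
    using assms by (auto simp: sq_integrable_def)
  finally show ?thesis .
qed

lemma integral_sq_diff_le: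
  assumes "sq_integrable M f" "sq_integrable M g" "sq_integrable M h"
  shows "(\<integral>x. (f x - g x)\<^sup>2 \<partial>M) \<le> 2 * (\<integral>x. (f x - h x)\<^sup>2 \<partial>M) + 2 * (\<integral>x. (h x - g x)\<^sup>2 \<partial>M)"
  using integral_sq_lincomb_le[of "\<lambda>x. f x - h x" "\<lambda>x. h x - g x" 1 1] assms
  by (simp add: sq_integrable_diff)

lemma trig_approximable_lincomb:
  assumes "sq_integrable M f" "sq_integrable M g" "trig_approximable M f" "trig_approximable M g"
  shows "trig_approximable M (\<lambda>x. a * f x + b * g x)"
  unfolding trig_approximable_def
proof (intro allI impI)
  fix e :: real
  assume "e > 0"
  define e' where "e' = e / (2 * a\<^sup>2 + 2 * b\<^sup>2 + 1)"
  have "e' > 0"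
    unfolding e'_def using \<open>e > 0\<close> by (simp add: add_nonneg_pos)
  obtain L1 where L1: "(\<integral>x. (f x - trig_poly L1 x)\<^sup>2 \<partial>M) < e'"
    using assms(3) \<open>e' > 0\<close> unfolding trig_approximable_def by blast
  obtain L2 where L2: "(\<integral>x. (g x - trig_poly L2 x)\<^sup>2 \<partial>M) < e'"
    using assms(4) \<open>e' > 0\<close> unfolding trig_approximable_def by blast
  let ?L = "trig_poly_scale a L1 @ trig_poly_scale b L2"
  have eq: "a * f x + b * g x - trig_poly ?L x
      = a * (f x - trig_poly L1 x) + b * (g x - trig_poly L2 x)" for x
    by (simp add: trig_poly_scale algebra_simps)
  have "(\<integral>x. (a * f x + b * g x - trig_poly ?L x)\<^sup>2 \<partial>M)
      \<le> 2 * a\<^sup>2 * (\<integral>x. (f x - trig_poly L1 x)\<^sup>2 \<partial>M) + 2 * b\<^sup>2 * (\<integral>x. (g x - trig_poly L2 x)\<^sup>2 \<partial>M)"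
    unfolding eq using assms(1,2)
    by (intro integral_sq_lincomb_le sq_integrable_diff sq_integrable_trig_poly)
  also have "\<dots> \<le> 2 * a\<^sup>2 * e' + 2 * b\<^sup>2 * e'"
    using L1 L2 by (intro add_mono mult_left_mono) auto
  also have "\<dots> = e * ((2 * a\<^sup>2 + 2 * b\<^sup>2) / (2 * a\<^sup>2 + 2 * b\<^sup>2 + 1))"
    unfolding e'_def by (simp add: add_divide_distrib algebra_simps)
  also have "\<dots> < e * 1"
    using \<open>e > 0\<close> by (intro mult_strict_left_mono) (auto simp: divide_less_eq_1 add_nonneg_pos)
  finally have "(\<integral>x. (a * f x + b * g x - trig_poly ?L x)\<^sup>2 \<partial>M) < e"
    by simp
  then show "\<exists>L. (\<integral>x. (a * f x + b * g x - trig_poly L x)\<^sup>2 \<partial>M) < e"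
    by blast
qed

lemma trig_approximable_sum:
  assumes "finite S" and "\<And>y. y \<in> S \<Longrightarrow> sq_integrable M (f y) \<and> trig_approximable M (f y)"
  shows "sq_integrable M (\<lambda>x. \<Sum>y\<in>S. f y x) \<and> trig_approximable M (\<lambda>x. \<Sum>y\<in>S. f y x)"
  using assms
proof (induction S rule: finite_induct)
  case empty
  have "trig_approximable M (\<lambda>x. 0)"
    unfolding trig_approximable_def by (auto intro: exI[of _ "[]"])
  then show ?case
    using sq_integrable_bounded[of "\<lambda>x. 0" 0] by simp
next
  case (insert y S)
  then show ?case
    using sq_integrable_lincomb[of "f y" "\<lambda>x. \<Sum>y\<in>S. f y x" 1 1]
      trig_approximable_lincomb[of "f y" "\<lambda>x. \<Sum>y\<in>S. f y x" 1 1]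
    by simp
qed

lemma trig_approximable_closed:
  assumes f: "sq_integrable M f"
    and approx: "\<And>e. e > 0 \<Longrightarrow> \<exists>g. sq_integrable M g \<and> trig_approximable M g \<and> (\<integral>x. (f x - g x)\<^sup>2 \<partial>M) < e"
  shows "trig_approximable M f"
  unfolding trig_approximable_def
proof (intro allI impI)
  fix e :: real
  assume "e > 0"
  then have "e / 4 > 0"
    by simp
  then obtain g where g: "sq_integrable M g" "trig_approximable M g" "(\<integral>x. (f x - g x)\<^sup>2 \<partial>M) < e / 4"
    using approx by blast
  obtain L where L: "(\<integral>x. (g x - trig_poly L x)\<^sup>2 \<partial>M) < e / 4"
    using g(2) \<open>e / 4 > 0\<close> unfolding trig_approximable_def by blast
  have "(\<integral>x. (f x - trig_poly L x)\<^sup>2 \<partial>M)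
      \<le> 2 * (\<integral>x. (f x - g x)\<^sup>2 \<partial>M) + 2 * (\<integral>x. (g x - trig_poly L x)\<^sup>2 \<partial>M)"
    by (rule integral_sq_diff_le[OF f sq_integrable_trig_poly g(1)])
  also have "\<dots> < e"
    using g(3) L by simp
  finally show "\<exists>L. (\<integral>x. (f x - trig_poly L x)\<^sup>2 \<partial>M) < e"
    by blast
qed

lemma measure_abs_gt_small:
  assumes "e > 0"
  shows "\<exists>R>0. measure M {x. R < \<bar>x\<bar>} < e"
proof -
  define A where "A n = {x::real. real n < \<bar>x\<bar>}" for n
  have A_sets: "A n \<in> sets M" for n
    unfolding A_def by measurable
  have "(\<Inter>n. A n) = {}"
  proof (intro equalityI subsetI)
    fix x
    assume "x \<in> (\<Inter>n. A n)"
    moreover obtain n where "\<bar>x\<bar> < real n"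
      using reals_Archimedean2 by blast
    then have "x \<notin> A n"
      unfolding A_def by simp
    ultimately show "x \<in> {}"
      by blast
  qed simp
  moreover have "(\<lambda>n. measure M (A n)) \<longlonglongrightarrow> measure M (\<Inter>n. A n)"
    using A_sets by (intro finite_Lim_measure_decseq) (auto simp: A_def decseq_def)
  ultimately have "(\<lambda>n. measure M (A n)) \<longlonglongrightarrow> 0"
    by simp
  then have "eventually (\<lambda>n. measure M (A n) < e) sequentially"
    using assms by (rule order_tendstoD(2))
  then obtain n where n: "measure M (A n) < e"
    by (auto simp: eventually_sequentially)
  have "measure M {x. real n + 1 < \<bar>x\<bar>} \<le> measure M (A n)"
    using A_sets unfolding A_def by (intro finite_measure_mono) auto
  with n show ?thesis
    by (intro exI[of _ "real n + 1"]) auto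
qed

end

lemma trig_poly_approx_on_interval:
  assumes g: "continuous_on UNIV g" and B: "\<And>x. \<bar>g x\<bar> \<le> B" and "R > 0" "\<delta> > 0"
  obtains L where "\<And>x. \<bar>x\<bar> \<le> R \<Longrightarrow> \<bar>g x - trig_poly L x\<bar> < \<delta>"
    and "\<And>x. \<bar>trig_poly L x\<bar> \<le> B + \<delta>"
proof -
  \<comment> \<open>On \<open>[-R, R]\<close> the map \<open>x \<mapsto> sin (\<pi> x / (2 R))\<close> is inverted by \<open>u \<mapsto> 2 R / \<pi> * arcsin u\<close>,
    so a polynomial approximation of \<open>\<psi>\<close> on \<open>[-1, 1]\<close> yields a trigonometric one of \<open>g\<close>.\<close>
  define \<psi> where "\<psi> u = g (2 * R / pi * arcsin u)" for u
  have "continuous_on {-1..1} \<psi>"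
    unfolding \<psi>_def
    by (intro continuous_on_compose2[OF g] continuous_intros continuous_on_arcsin') auto
  then obtain p where p: "polynomial_function p" "\<forall>u\<in>{-1..1}. norm (\<psi> u - p u) < \<delta>"
    using Stone_Weierstrass_polynomial_function[of "{-1..1::real}" \<psi> \<delta>] \<open>\<delta> > 0\<close> by auto
  obtain L where L: "\<And>x. p (sin (pi / (2 * R) * x)) = trig_poly L x"
    using trig_poly_of_polynomial_sin[of p "pi / (2 * R)"] p(1) real_polynomial_function_eq by blast
  have close: "\<bar>\<psi> (sin (pi / (2 * R) * x)) - trig_poly L x\<bar> < \<delta>" for x
    using p(2)[rule_format, of "sin (pi / (2 * R) * x)"] L[of x] by simp
  show ?thesis
  proof
    fix x :: real
    assume "\<bar>x\<bar> \<le> R"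
    then have "pi / (2 * R) * \<bar>x\<bar> \<le> pi / (2 * R) * R"
      using \<open>R > 0\<close> by (intro mult_left_mono) auto
    then have "\<bar>pi / (2 * R) * x\<bar> \<le> pi / 2"
      using \<open>R > 0\<close> by (simp add: abs_mult)
    then have "- (pi / 2) \<le> pi / (2 * R) * x" "pi / (2 * R) * x \<le> pi / 2"
      using abs_le_D1 abs_le_D2 by fastforce+
    then have "arcsin (sin (pi / (2 * R) * x)) = pi / (2 * R) * x"
      by (rule arcsin_sin)
    then have "\<psi> (sin (pi / (2 * R) * x)) = g x"
      unfolding \<psi>_def using \<open>R > 0\<close> by simp
    then show "\<bar>g x - trig_poly L x\<bar> < \<delta>"
      using close[of x] by simp
  next
    fix x :: real
    have "\<bar>\<psi> (sin (pi / (2 * R) * x))\<bar> \<le> B"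
      unfolding \<psi>_def by (rule B)
    then show "\<bar>trig_poly L x\<bar> \<le> B + \<delta>"
      using close[of x] by linarith
  qed
qed

lemma trig_poly_sq_approx_off_tail:
  assumes g: "continuous_on UNIV g" and B: "\<And>x. \<bar>g x\<bar> \<le> B" and "R > 0" "\<delta> > 0" "\<delta> \<le> 1"
  obtains L where "\<And>x. (g x - trig_poly L x)\<^sup>2 \<le> \<delta>\<^sup>2 + (2 * B + 1)\<^sup>2 * indicator {x. R < \<bar>x\<bar>} x"
proof -
  obtain L where L: "\<And>x. \<bar>x\<bar> \<le> R \<Longrightarrow> \<bar>g x - trig_poly L x\<bar> < \<delta>" "\<And>x. \<bar>trig_poly L x\<bar> \<le> B + \<delta>"
    using trig_poly_approx_on_interval[OF g B \<open>R > 0\<close> \<open>\<delta> > 0\<close>] by blast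
  have "(g x - trig_poly L x)\<^sup>2 \<le> \<delta>\<^sup>2 + (2 * B + 1)\<^sup>2 * indicator {x. R < \<bar>x\<bar>} x" for x
  proof (cases "\<bar>x\<bar> \<le> R")
    case True
    then have "(g x - trig_poly L x)\<^sup>2 \<le> \<delta>\<^sup>2"
      using L(1) power_mono[OF less_imp_le abs_ge_zero, of _ \<delta> 2] by simp
    with True show ?thesis
      by simp
  next
    case False
    have "\<bar>g x - trig_poly L x\<bar> \<le> 2 * B + 1"
      using B[of x] L(2)[of x] \<open>\<delta> \<le> 1\<close> by linarith
    then have "(g x - trig_poly L x)\<^sup>2 \<le> (2 * B + 1)\<^sup>2"
      using power_mono[OF _ abs_ge_zero, of _ "2 * B + 1" 2] by simp
    with False show ?thesis
      by (simp add: add_increasing)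
  qed
  then show ?thesis
    by (rule that)
qed

context real_distribution
begin

lemma trig_approximable_continuous:
  assumes g: "continuous_on UNIV g" and B: "\<And>x. \<bar>g x\<bar> \<le> B"
  shows "trig_approximable M g"
  unfolding trig_approximable_def
proof (intro allI impI)
  fix e :: real
  assume "e > 0"
  define \<delta> where "\<delta> = min 1 (sqrt (e / 4))"
  have \<delta>: "\<delta> > 0" "\<delta> \<le> 1"
    unfolding \<delta>_def using \<open>e > 0\<close> by auto
  have "\<delta>\<^sup>2 \<le> (sqrt (e / 4))\<^sup>2"
    using \<delta>(1) unfolding \<delta>_def by (intro power_mono) auto
  with \<open>e > 0\<close> have "\<delta>\<^sup>2 \<le> e / 4"
    by simp
  define C where "C = (2 * B + 1)\<^sup>2"
  have "C > 0"
    unfolding C_def using B[of 0] by simp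
  obtain R where R: "R > 0" "measure M {x. R < \<bar>x\<bar>} < e / (4 * C)"
    using measure_abs_gt_small[of "e / (4 * C)"] \<open>e > 0\<close> \<open>C > 0\<close> by auto
  define S where "S = {x::real. R < \<bar>x\<bar>}"
  have "S \<in> sets M"
    unfolding S_def by measurable
  then have int_S: "integrable M (indicator S :: real \<Rightarrow> real)"
    by (intro integrable_const_bound[where B=1]) (auto simp: indicator_def)
  obtain L where L: "\<And>x. (g x - trig_poly L x)\<^sup>2 \<le> \<delta>\<^sup>2 + C * indicator S x"
    using trig_poly_sq_approx_off_tail[OF g B R(1) \<delta>] unfolding C_def S_def by blast
  have g_sq: "sq_integrable M g"
    using borel_measurable_continuous_onI[OF g] B by (rule sq_integrable_bounded)
  have "(\<integral>x. (g x - trig_poly L x)\<^sup>2 \<partial>M) \<le> (\<integral>x. \<delta>\<^sup>2 + C * indicator S x \<partial>M)"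
    using sq_integrable_diff[OF g_sq sq_integrable_trig_poly] int_S L
    by (intro integral_mono) (auto simp: sq_integrable_def)
  also have "\<dots> = \<delta>\<^sup>2 + C * measure M S"
    using int_S prob_space by simp
  also have "\<dots> < e / 4 + C * (e / (4 * C))"
    using \<open>\<delta>\<^sup>2 \<le> e / 4\<close> R(2) \<open>C > 0\<close> unfolding S_def by (intro add_le_less_mono mult_strict_left_mono) auto
  also have "\<dots> < e"
    using \<open>C > 0\<close> \<open>e > 0\<close> by simp
  finally show "\<exists>L. (\<integral>x. (g x - trig_poly L x)\<^sup>2 \<partial>M) < e"
    by blast
qed

lemma compact_open_approx:
  assumes "A \<in> sets borel" and "\<eta> > 0"
  obtains K U where "compact K" "open U" "K \<subseteq> A" "A \<subseteq> U" "measure M U - measure M K < \<eta>"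
proof -
  have fin: "emeasure M (space M) \<noteq> \<infinity>"
    by simp
  obtain K where K: "compact K" "K \<subseteq> A" "measure M A - \<eta> / 2 < measure M K"
  proof (cases "measure M A < \<eta> / 2")
    case True
    then show ?thesis
      using that[of "{}"] by auto
  next
    case False
    then have "ennreal (measure M A - \<eta> / 2) < emeasure M A"
      using \<open>\<eta> > 0\<close> by (simp add: emeasure_eq_measure ennreal_less_iff)
    also have "\<dots> = (SUP K \<in> {K. K \<subseteq> A \<and> compact K}. emeasure M K)"
      by (rule inner_regular[OF events_eq_borel fin assms(1)])
    finally obtain K where "K \<subseteq> A" "compact K" "ennreal (measure M A - \<eta> / 2) < emeasure M K"
      by (auto simp: less_SUP_iff)
    then show ?thesis
      using that[of K] False by (auto simp: emeasure_eq_measure ennreal_less_iff)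
  qed
  have "emeasure M A < ennreal (measure M A + \<eta> / 2)"
    using \<open>\<eta> > 0\<close> by (simp add: emeasure_eq_measure ennreal_less_iff)
  also have "emeasure M A = (INF U \<in> {U. A \<subseteq> U \<and> open U}. emeasure M U)"
    by (rule outer_regular[OF events_eq_borel fin assms(1)])
  finally obtain U where U: "A \<subseteq> U" "open U" "emeasure M U < ennreal (measure M A + \<eta> / 2)"
    by (auto simp: INF_less_iff)
  have "measure M U < measure M A + \<eta> / 2"
    using U(3) by (simp add: emeasure_eq_measure ennreal_less_iff)
  with K U show ?thesis
    using that by force
qed

lemma trig_approximable_indicator:
  assumes A: "A \<in> sets borel"
  shows "trig_approximable M (indicator A)"
proof (rule trig_approximable_closed)
  show A_sq: "sq_integrable M (indicator A)"
    using A by (intro sq_integrable_bounded[where B=1]) (auto simp: indicator_def)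
  fix e :: real
  assume "e > 0"
  then obtain K U where KU: "compact K" "open U" "K \<subseteq> A" "A \<subseteq> U" "measure M U - measure M K < e"
    using compact_open_approx[OF A] by blast
  then have KU_sets: "U \<in> sets M" "K \<in> sets M"
    by (auto intro: borel_open borel_closed compact_imp_closed)
  obtain f :: "real \<Rightarrow> real" where f: "continuous_on UNIV f" "\<And>x. f x \<in> closed_segment 1 0"
    "\<And>x. x \<in> K \<Longrightarrow> f x = 1" "\<And>x. x \<in> - U \<Longrightarrow> f x = 0"
    using Urysohn[of K "- U" 1 0] KU by (auto intro: compact_imp_closed)
  have f01: "0 \<le> f x" "f x \<le> 1" for x
    using f(2)[of x] by (auto simp: closed_segment_eq_real_ivl)
  have f_sq: "sq_integrable M f"
    using f01 borel_measurable_continuous_onI[OF f(1)]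
    by (intro sq_integrable_bounded[where B=1]) (auto simp: abs_le_iff)
  have pointwise: "(indicator A x - f x)\<^sup>2 \<le> indicator (U - K) x" for x
  proof -
    have "\<bar>indicator A x - f x\<bar> \<le> 1"
      using f01[of x] by (simp add: indicator_def)
    then have "(indicator A x - f x)\<^sup>2 \<le> 1"
      by (simp add: abs_le_square_iff[of _ 1, simplified])
    then show ?thesis
      using KU(3,4) f(3,4)[of x] by (auto simp: indicator_def)
  qed
  have "integrable M (indicator (U - K) :: real \<Rightarrow> real)"
    using KU_sets by (intro integrable_const_bound[where B=1]) (auto simp: indicator_def)
  then have "(\<integral>x. (indicator A x - f x)\<^sup>2 \<partial>M) \<le> (\<integral>x. indicator (U - K) x \<partial>M)"
    using sq_integrable_diff[OF A_sq f_sq] pointwise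
    by (intro integral_mono) (auto simp: sq_integrable_def)
  also have "\<dots> = measure M U - measure M K"
    using KU_sets KU(3,4) by (simp add: finite_measure_Diff)
  finally have "(\<integral>x. (indicator A x - f x)\<^sup>2 \<partial>M) < e"
    using KU(5) by simp
  moreover have "trig_approximable M f"
    using f01 by (intro trig_approximable_continuous[OF f(1), of 1]) (simp add: abs_le_iff)
  ultimately show "\<exists>g. sq_integrable M g \<and> trig_approximable M g \<and> (\<integral>x. (indicator A x - g x)\<^sup>2 \<partial>M) < e"
    using f_sq by blast
qed

lemma trig_approximable_simple:
  assumes f: "simple_function borel f"
  shows "sq_integrable M f \<and> trig_approximable M f"
proof -
  define g where "g x = (\<Sum>y\<in>range f. y * indicator (f -` {y}) x)" for x
  have "g = f"
  proof
    fix x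
    \<comment> \<open>The representation must not be used as a rewrite rule: \<open>f x\<close> reappears inside the indicators.\<close>
    have "f x = (\<Sum>y\<in>f ` space borel. indicator (f -` {y} \<inter> space borel) x *\<^sub>R y)"
      using f by (rule simple_function_indicator_representation_banach) simp
    moreover have "(\<Sum>y\<in>f ` space borel. indicator (f -` {y} \<inter> space borel) x *\<^sub>R y) = g x"
      unfolding g_def by (simp add: mult.commute)
    ultimately show "g x = f x"
      by (rule trans[THEN sym])
  qed
  have level_sets: "f -` {y} \<in> sets borel" for y
    using simple_functionD(2)[OF f, of "{y}"] by simp
  have "sq_integrable M (\<lambda>x. y * indicator (f -` {y}) x) \<and> trig_approximable M (\<lambda>x. y * indicator (f -` {y}) x)"
    for y
  proof -
    have sq: "sq_integrable M (indicator (f -` {y}))"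
      using level_sets by (intro sq_integrable_bounded[where B=1]) (auto simp: indicator_def)
    have "trig_approximable M (indicator (f -` {y}))"
      using level_sets by (rule trig_approximable_indicator)
    then show ?thesis
      using sq_integrable_lincomb[OF sq sq, of y 0] trig_approximable_lincomb[OF sq sq, of y 0] by simp
  qed
  then have "sq_integrable M g \<and> trig_approximable M g"
    unfolding g_def using simple_functionD(1)[OF f] by (intro trig_approximable_sum) simp_all
  with \<open>g = f\<close> show ?thesis
    by simp
qed

lemma simple_function_sq_approx:
  assumes h: "sq_integrable M h"
  obtains F where "\<And>i. simple_function borel (F i)" and "(\<lambda>i. \<integral>x. (h x - F i x)\<^sup>2 \<partial>M) \<longlonglongrightarrow> 0"
proof -
  have [measurable]: "h \<in> borel_measurable borel"
    using h by (simp add: sq_integrable_def)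
  obtain F where F: "\<And>i. simple_function borel (F i)" "\<And>x. (\<lambda>i. F i x) \<longlonglongrightarrow> h x"
    "\<And>i x. dist (F i x) 0 \<le> 2 * dist (h x) 0"
    using borel_measurable_implies_sequence_metric[of h borel 0] by auto
  have [measurable]: "F i \<in> borel_measurable borel" for i
    using F(1) by (rule borel_measurable_simple_function)
  have "(\<lambda>i. \<integral>x. (h x - F i x)\<^sup>2 \<partial>M) \<longlonglongrightarrow> (\<integral>x. 0 \<partial>M)"
  proof (rule integral_dominated_convergence[where w="\<lambda>x. 9 * (h x)\<^sup>2"])
    show "integrable M (\<lambda>x. 9 * (h x)\<^sup>2)"
      using h by (simp add: sq_integrable_def)
    show "AE x in M. (\<lambda>i. (h x - F i x)\<^sup>2) \<longlonglongrightarrow> 0"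
    proof (rule AE_I2)
      fix x
      have "(\<lambda>i. (h x - F i x)\<^sup>2) \<longlonglongrightarrow> (h x - h x)\<^sup>2"
        by (intro tendsto_intros F(2))
      then show "(\<lambda>i. (h x - F i x)\<^sup>2) \<longlonglongrightarrow> 0"
        by simp
    qed
    have "\<bar>h x - F i x\<bar> \<le> \<bar>3 * h x\<bar>" for i x
      using F(3)[of i x] by (simp add: dist_real_def abs_mult)
    then show "AE x in M. norm ((h x - F i x)\<^sup>2) \<le> 9 * (h x)\<^sup>2" for i
      by (simp add: abs_le_square_iff power_mult_distrib)
  qed measurable
  then have "(\<lambda>i. \<integral>x. (h x - F i x)\<^sup>2 \<partial>M) \<longlonglongrightarrow> 0"
    by simp
  with F(1) show ?thesis
    by (rule that)
qed

theorem trig_approximable_sq_integrable: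
  assumes h: "sq_integrable M h"
  shows "trig_approximable M h"
proof (rule trig_approximable_closed[OF h])
  obtain F where F: "\<And>i. simple_function borel (F i)" "(\<lambda>i. \<integral>x. (h x - F i x)\<^sup>2 \<partial>M) \<longlonglongrightarrow> 0"
    using simple_function_sq_approx[OF h] by blast
  fix e :: real
  assume "e > 0"
  with F(2) have "eventually (\<lambda>i. (\<integral>x. (h x - F i x)\<^sup>2 \<partial>M) < e) sequentially"
    by (rule order_tendstoD(2))
  then obtain i where "(\<integral>x. (h x - F i x)\<^sup>2 \<partial>M) < e"
    by (auto simp: eventually_sequentially)
  then show "\<exists>g. sq_integrable M g \<and> trig_approximable M g \<and> (\<integral>x. (h x - g x)\<^sup>2 \<partial>M) < e"
    using trig_approximable_simple[OF F(1)] by blast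
qed

end

lemma std_normal_integral_cos_sin:
  shows "(\<integral>w. cos (a * w) \<partial>std_normal_distribution) = exp (- a\<^sup>2 / 2)"
    and "(\<integral>w. sin (a * w) \<partial>std_normal_distribution) = 0"
proof -
  interpret real_distribution std_normal_distribution
    by (rule real_dist_normal_dist)
  have int: "integrable std_normal_distribution (\<lambda>w. iexp (a * w))"
    by (intro integrable_iexp) auto
  have "(\<integral>w. cos (a * w) \<partial>std_normal_distribution) = (\<integral>w. Re (iexp (a * w)) \<partial>std_normal_distribution)"
    by (simp add: Re_exp)
  also have "\<dots> = Re (char std_normal_distribution a)"
    unfolding char_def using int by simp
  finally show "(\<integral>w. cos (a * w) \<partial>std_normal_distribution) = exp (- a\<^sup>2 / 2)"
    by (simp add: char_std_normal_distribution)
  have "(\<integral>w. sin (a * w) \<partial>std_normal_distribution) = (\<integral>w. Im (iexp (a * w)) \<partial>std_normal_distribution)"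
    by (simp add: Im_exp)
  also have "\<dots> = Im (char std_normal_distribution a)"
    unfolding char_def using int by simp
  finally show "(\<integral>w. sin (a * w) \<partial>std_normal_distribution) = 0"
    by (simp add: char_std_normal_distribution)
qed

context prob_space
begin

lemma normal_distributed_expectation_cos_sin:
  assumes "\<sigma> > 0" and Z: "distributed M lborel Z (normal_density 0 \<sigma>)"
  shows "expectation (\<lambda>x. cos (Z x)) = exp (- \<sigma>\<^sup>2 / 2)"
    and "expectation (\<lambda>x. sin (Z x)) = 0"
proof -
  have [measurable]: "Z \<in> borel_measurable M"
    using distributed_measurable[OF Z] by simp
  have "distributed M lborel (\<lambda>x. 0 + (1 / \<sigma>) * Z x) (normal_density (0 + (1 / \<sigma>) * 0) (\<bar>1 / \<sigma>\<bar> * \<sigma>))"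
    using \<open>\<sigma> > 0\<close> by (intro normal_density_affine[OF Z]) auto
  then have "distributed M lborel (\<lambda>x. Z x / \<sigma>) std_normal_density"
    using \<open>\<sigma> > 0\<close> by simp
  then have std: "distr M borel (\<lambda>x. Z x / \<sigma>) = std_normal_distribution"
    using distributed_distr_eq_density by (metis distr_cong sets_lborel)
  have "expectation (\<lambda>x. f (Z x)) = (\<integral>w. f (\<sigma> * w) \<partial>std_normal_distribution)"
    if [measurable]: "f \<in> borel_measurable borel" for f :: "real \<Rightarrow> real"
    using \<open>\<sigma> > 0\<close> integral_distr[of "\<lambda>x. Z x / \<sigma>" M borel "\<lambda>w. f (\<sigma> * w)"]
    unfolding std by simp
  then show "expectation (\<lambda>x. cos (Z x)) = exp (- \<sigma>\<^sup>2 / 2)"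
    and "expectation (\<lambda>x. sin (Z x)) = 0"
    by (simp_all add: std_normal_integral_cos_sin)
qed

lemma gaussian_rv_expectation_cos_sin:
  assumes Z: "gaussian_rv M Z" and mean: "expectation Z = 0"
    and var: "expectation (\<lambda>x. (Z x)\<^sup>2) = V"
  shows "expectation (\<lambda>x. cos (Z x)) = exp (- V / 2)"
    and "expectation (\<lambda>x. sin (Z x)) = 0"
proof -
  have Z_meas: "Z \<in> borel_measurable M"
    using Z unfolding gaussian_rv_def by blast
  obtain \<mu> \<sigma> where "(\<sigma> = 0 \<and> (AE x in M. Z x = \<mu>)) \<or> (\<sigma> > 0 \<and> distributed M lborel Z (normal_density \<mu> \<sigma>))"
    using Z unfolding gaussian_rv_def by blast
  then have "expectation (\<lambda>x. cos (Z x)) = exp (- V / 2) \<and> expectation (\<lambda>x. sin (Z x)) = 0"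
  proof
    assume "\<sigma> = 0 \<and> (AE x in M. Z x = \<mu>)"
    then have ae: "AE x in M. Z x = \<mu>"
      by simp
    have const: "expectation (\<lambda>x. f (Z x)) = f \<mu>" if "f \<in> borel_measurable borel" for f :: "real \<Rightarrow> real"
    proof -
      have "(\<lambda>x. f (Z x)) \<in> borel_measurable M"
        using measurable_compose[OF Z_meas that] by (simp add: comp_def)
      then have "expectation (\<lambda>x. f (Z x)) = expectation (\<lambda>_. f \<mu>)"
        using ae by (intro integral_cong_AE) auto
      then show ?thesis
        by (simp add: prob_space)
    qed
    have "\<mu> = 0"
      using const[of "\<lambda>x. x"] mean by simp
    moreover have "V = 0"
      using const[of "\<lambda>x. x\<^sup>2"] var \<open>\<mu> = 0\<close> by simp
    ultimately show ?thesis
      using const[of cos] const[of sin] by simp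
  next
    assume "\<sigma> > 0 \<and> distributed M lborel Z (normal_density \<mu> \<sigma>)"
    then have "\<sigma> > 0" and D: "distributed M lborel Z (normal_density \<mu> \<sigma>)"
      by auto
    have "\<mu> = 0"
      using normal_distributed_expectation[OF \<open>\<sigma> > 0\<close> D] mean by simp
    moreover have "V = \<sigma>\<^sup>2"
      using normal_distributed_variance[OF \<open>\<sigma> > 0\<close> D] mean var by simp
    ultimately show ?thesis
      using normal_distributed_expectation_cos_sin[OF \<open>\<sigma> > 0\<close>] D by simp
  qed
  then show "expectation (\<lambda>x. cos (Z x)) = exp (- V / 2)"
    and "expectation (\<lambda>x. sin (Z x)) = 0"
    by auto
qed

end

section \<open>Mixed moments of pairwise Gaussian vectors\<close>

lemma sums_sum_list:
  fixes f :: "'a \<Rightarrow> nat \<Rightarrow> 'b::real_normed_vector"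
  assumes "\<And>p. p \<in> set L \<Longrightarrow> f p sums s p"
  shows "(\<lambda>n. \<Sum>p\<leftarrow>L. f p n) sums (\<Sum>p\<leftarrow>L. s p)"
  using assms
proof (induction L)
  case (Cons p L)
  then have "f p sums s p" and "(\<lambda>n. \<Sum>q\<leftarrow>L. f q n) sums (\<Sum>q\<leftarrow>L. s q)"
    by auto
  then have "(\<lambda>n. f p n + (\<Sum>q\<leftarrow>L. f q n)) sums (s p + (\<Sum>q\<leftarrow>L. s q))"
    by (rule sums_add)
  then show ?case
    by simp
qed simp

lemma sum_list_mult_sum_list:
  fixes f g :: "_ \<Rightarrow> 'a::semiring_0"
  shows "(\<Sum>x\<leftarrow>xs. f x) * (\<Sum>y\<leftarrow>ys. g y) = (\<Sum>x\<leftarrow>xs. \<Sum>y\<leftarrow>ys. f x * g y)"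
  by (induction xs) (simp_all add: distrib_right sum_list_const_mult)

lemma integral_sum_list:
  fixes f :: "'b \<Rightarrow> 'a \<Rightarrow> real"
  assumes "\<And>p. p \<in> set L \<Longrightarrow> integrable M (f p)"
  shows "integrable M (\<lambda>x. \<Sum>p\<leftarrow>L. f p x) \<and> (\<integral>x. (\<Sum>p\<leftarrow>L. f p x) \<partial>M) = (\<Sum>p\<leftarrow>L. \<integral>x. f p x \<partial>M)"
  using assms by (induction L) auto

text \<open>The coefficients of \<open>E[u(x) v(y)]\<close> in powers of the correlation of a standard Gaussian
  pair \<open>(x, y)\<close>, for trigonometric terms \<open>u\<close>, \<open>v\<close>; they play the role of Hermite coefficients.\<close>

fun trig_coeff :: "nat \<Rightarrow> real \<times> real \<times> real \<Rightarrow> real" where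
  "trig_coeff n (a, b, \<omega>) = (if even n then a else b) * exp (- \<omega>\<^sup>2 / 2) * \<omega> ^ n"

definition trig_poly_coeff :: "nat \<Rightarrow> (real \<times> real \<times> real) list \<Rightarrow> real" where
  "trig_poly_coeff n L = (\<Sum>p\<leftarrow>L. trig_coeff n p)"

lemma trig_coeff_prod_sums:
  "(\<lambda>n. r ^ n / fact n * trig_coeff n (a, b, s) * trig_coeff n (c, d, t)) sums
     (exp (- (s\<^sup>2 + t\<^sup>2) / 2) * (a * c * cosh (r * s * t) + b * d * sinh (r * s * t)))"
proof -
  define x where "x = r * s * t"
  have "(\<lambda>n. exp (- (s\<^sup>2 + t\<^sup>2) / 2) *
      (a * c * (if even n then x ^ n / fact n else 0) + b * d * (if even n then 0 else x ^ n / fact n)))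
      sums (exp (- (s\<^sup>2 + t\<^sup>2) / 2) * (a * c * cosh x + b * d * sinh x))"
  proof (intro sums_mult sums_add)
    have "(\<lambda>n. if even n then x ^ n /\<^sub>R fact n else 0) = (\<lambda>n. if even n then x ^ n / fact n else 0)"
      by (rule ext) (simp add: field_simps)
    with cosh_converges[of x] show "(\<lambda>n. if even n then x ^ n / fact n else 0) sums cosh x"
      by simp
    have "(\<lambda>n. if even n then 0 else x ^ n /\<^sub>R fact n) = (\<lambda>n. if even n then 0 else x ^ n / fact n)"
      by (rule ext) (simp add: field_simps)
    with sinh_converges[of x] show "(\<lambda>n. if even n then 0 else x ^ n / fact n) sums sinh x"
      by simp
  qed
  moreover have "r ^ n / fact n * trig_coeff n (a, b, s) * trig_coeff n (c, d, t)
      = exp (- (s\<^sup>2 + t\<^sup>2) / 2) *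
        (a * c * (if even n then x ^ n / fact n else 0) + b * d * (if even n then 0 else x ^ n / fact n))" for n
  proof -
    have "exp (- s\<^sup>2 / 2) * exp (- t\<^sup>2 / 2) = exp (- (s\<^sup>2 + t\<^sup>2) / 2)"
      by (simp add: exp_add[symmetric] field_simps)
    moreover have "r ^ n * s ^ n * t ^ n = x ^ n"
      unfolding x_def by (simp add: power_mult_distrib)
    ultimately show ?thesis
      by (cases "even n") (simp_all add: field_simps)
  qed
  ultimately show ?thesis
    unfolding x_def by simp
qed

locale pairwise_gaussian = prob_space M for M :: "(real ^ 'd::finite) measure" +
  assumes sets_eq_borel [measurable_cong]: "sets M = sets borel"
    and coordinate_std_normal: "\<And>i. distributed M lborel (\<lambda>x. x $ i) std_normal_density"
    and coordinates_jointly_gaussian: "\<And>i j. jointly_gaussian M (\<lambda>x. x $ i) (\<lambda>x. x $ j)"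
begin

lemma space_eq_UNIV [simp]: "space M = UNIV"
  using sets_eq_imp_space_eq[OF sets_eq_borel] by simp

lemma distr_coordinate: "distr M borel (\<lambda>x. x $ i) = std_normal_distribution"
proof -
  have "distr M borel (\<lambda>x. x $ i) = distr M lborel (\<lambda>x. x $ i)"
    by (rule distr_cong) auto
  also have "\<dots> = std_normal_distribution"
    by (rule distributed_distr_eq_density[OF coordinate_std_normal])
  finally show ?thesis .
qed

lemma integral_coordinate:
  fixes g :: "real \<Rightarrow> real"
  assumes "g \<in> borel_measurable borel"
  shows "(\<integral>x. g (x $ i) \<partial>M) = (\<integral>w. g w \<partial>std_normal_distribution)"
  using integral_distr[of "\<lambda>x. x $ i" M borel g] assms distr_coordinate[of i] by simp

lemma integrable_coordinate_iff:
  fixes g :: "real \<Rightarrow> real"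
  assumes "g \<in> borel_measurable borel"
  shows "integrable M (\<lambda>x. g (x $ i)) \<longleftrightarrow> integrable std_normal_distribution g"
  using integrable_distr_eq[of "\<lambda>x. x $ i" M borel g] assms distr_coordinate[of i] by simp

lemma coordinate_moments:
  shows "integrable M (\<lambda>x. x $ i)" and "expectation (\<lambda>x. x $ i) = 0"
    and "integrable M (\<lambda>x. (x $ i)\<^sup>2)" and "expectation (\<lambda>x. (x $ i)\<^sup>2) = 1"
  using integrable_coordinate_iff[of "\<lambda>x. x" i] integrable_coordinate_iff[of "\<lambda>x. x ^ 2" i]
    integral_coordinate[of "\<lambda>x. x" i] integral_coordinate[of "\<lambda>x. x ^ 2" i]
    integrable_std_normal_distribution_moment[of 1] integrable_std_normal_distribution_moment[of 2]
    integral_std_normal_distribution_moment_odd[of 1] std_normal_distribution_even_moments(1)[of 1]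
  by simp_all

lemma integrable_coordinate_mult: "integrable M (\<lambda>x. x $ i * x $ j)"
proof (rule Bochner_Integration.integrable_bound)
  show "integrable M (\<lambda>x. (x $ i)\<^sup>2 + (x $ j)\<^sup>2)"
    using coordinate_moments by simp
  show "AE x in M. norm (x $ i * x $ j) \<le> norm ((x $ i)\<^sup>2 + (x $ j)\<^sup>2)"
  proof (rule AE_I2)
    fix x :: "real ^ 'd"
    have "0 \<le> \<bar>x $ i\<bar> * \<bar>x $ j\<bar>"
      by simp
    then have "\<bar>x $ i * x $ j\<bar> \<le> 2 * (\<bar>x $ i\<bar> * \<bar>x $ j\<bar>)"
      unfolding abs_mult by linarith
    also have "\<dots> \<le> (x $ i)\<^sup>2 + (x $ j)\<^sup>2"
      using sum_squares_bound[of "\<bar>x $ i\<bar>" "\<bar>x $ j\<bar>"] by simp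
    finally show "norm (x $ i * x $ j) \<le> norm ((x $ i)\<^sup>2 + (x $ j)\<^sup>2)"
      by (simp add: abs_of_nonneg)
  qed
qed measurable

lemma expectation_cos_sin_pair:
  "expectation (\<lambda>x. cos (s * x $ i + t * x $ j)) = exp (- (s\<^sup>2 + t\<^sup>2 + 2 * s * t * second_moment M i j) / 2)"
  "expectation (\<lambda>x. sin (s * x $ i + t * x $ j)) = 0"
proof -
  have "gaussian_rv M (\<lambda>x. s * x $ i + t * x $ j)"
    using coordinates_jointly_gaussian unfolding jointly_gaussian_def by blast
  moreover have "expectation (\<lambda>x. s * x $ i + t * x $ j) = 0"
    using coordinate_moments by simp
  moreover have "expectation (\<lambda>x. (s * x $ i + t * x $ j)\<^sup>2) = s\<^sup>2 + t\<^sup>2 + 2 * s * t * second_moment M i j"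
  proof -
    have "(\<lambda>x. (s * x $ i + t * x $ j)\<^sup>2) = (\<lambda>x. s\<^sup>2 * (x $ i)\<^sup>2 + t\<^sup>2 * (x $ j)\<^sup>2 + (2 * s * t) * (x $ i * x $ j))"
      by (simp add: power2_eq_square algebra_simps)
    then show ?thesis
      using coordinate_moments integrable_coordinate_mult[of i j] by (simp add: second_moment_def)
  qed
  ultimately show "expectation (\<lambda>x. cos (s * x $ i + t * x $ j)) = exp (- (s\<^sup>2 + t\<^sup>2 + 2 * s * t * second_moment M i j) / 2)"
    and "expectation (\<lambda>x. sin (s * x $ i + t * x $ j)) = 0"
    by (rule gaussian_rv_expectation_cos_sin)+
qed

lemma integrable_bounded:
  fixes f :: "real ^ 'd \<Rightarrow> real"
  assumes "f \<in> borel_measurable borel" and "\<And>x. \<bar>f x\<bar> \<le> B"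
  shows "integrable M f"
  using assms by (intro integrable_const_bound[where B=B]) auto

lemma integrable_trig_poly_pair: "integrable M (\<lambda>x. trig_poly L1 (x $ i) * trig_poly L2 (x $ j))"
proof -
  obtain B1 B2 where "\<And>x. \<bar>trig_poly L1 x\<bar> \<le> B1" "\<And>x. \<bar>trig_poly L2 x\<bar> \<le> B2"
    using trig_poly_bounded by metis
  then have "\<bar>trig_poly L1 (x $ i) * trig_poly L2 (x $ j)\<bar> \<le> B1 * B2" for x
    unfolding abs_mult by (intro mult_mono) (auto intro: order_trans[OF abs_ge_zero])
  then show ?thesis
    by (intro integrable_bounded) auto
qed

lemma expectation_trig_term_pair:
  "expectation (\<lambda>x. trig_term (a, b, s) (x $ i) * trig_term (c, d, t) (x $ j))
     = exp (- (s\<^sup>2 + t\<^sup>2) / 2) * (a * c * cosh (second_moment M i j * s * t) + b * d * sinh (second_moment M i j * s * t))"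
proof -
  let ?\<rho> = "second_moment M i j"
  define Cp where "Cp x = cos (s * x $ i + t * x $ j)" for x
  define Cm where "Cm x = cos (s * x $ i + (- t) * x $ j)" for x
  define Sp where "Sp x = sin (s * x $ i + t * x $ j)" for x
  define Sm where "Sm x = sin (s * x $ i + (- t) * x $ j)" for x
  have eq: "trig_term (a, b, s) (x $ i) * trig_term (c, d, t) (x $ j) =
      ((a * c - b * d) / 2 * Cp x + (a * c + b * d) / 2 * Cm x)
      + ((a * d + b * c) / 2 * Sp x + (b * c - a * d) / 2 * Sm x)" for x
    unfolding Cp_def Cm_def Sp_def Sm_def
    by (simp add: cos_add sin_add cos_diff sin_diff algebra_simps add_divide_distrib diff_divide_distrib)
  have "integrable M Cp" "integrable M Cm" "integrable M Sp" "integrable M Sm"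
    unfolding Cp_def Cm_def Sp_def Sm_def by (auto intro: integrable_bounded[where B=1])
  moreover have "expectation Cp = exp (- (s\<^sup>2 + t\<^sup>2 + 2 * s * t * ?\<rho>) / 2)"
    "expectation Cm = exp (- (s\<^sup>2 + (- t)\<^sup>2 + 2 * s * (- t) * ?\<rho>) / 2)"
    "expectation Sp = 0" "expectation Sm = 0"
    unfolding Cp_def Cm_def Sp_def Sm_def by (fact expectation_cos_sin_pair)+
  ultimately have "expectation (\<lambda>x. trig_term (a, b, s) (x $ i) * trig_term (c, d, t) (x $ j))
      = (a * c - b * d) / 2 * exp (- (s\<^sup>2 + t\<^sup>2 + 2 * s * t * ?\<rho>) / 2)
        + (a * c + b * d) / 2 * exp (- (s\<^sup>2 + (- t)\<^sup>2 + 2 * s * (- t) * ?\<rho>) / 2)"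
    unfolding eq by simp
  also have "\<dots> = exp (- (s\<^sup>2 + t\<^sup>2) / 2) * (a * c * cosh (?\<rho> * s * t) + b * d * sinh (?\<rho> * s * t))"
    by (simp add: cosh_def sinh_def exp_add[symmetric] field_simps)
  finally show ?thesis .
qed

lemma trig_poly_pair_sums:
  "(\<lambda>n. second_moment M i j ^ n / fact n * trig_poly_coeff n L1 * trig_poly_coeff n L2)
     sums expectation (\<lambda>x. trig_poly L1 (x $ i) * trig_poly L2 (x $ j))"
proof -
  let ?\<rho> = "second_moment M i j"
  have term_sums: "(\<lambda>n. ?\<rho> ^ n / fact n * trig_coeff n p * trig_coeff n q)
      sums expectation (\<lambda>x. trig_term p (x $ i) * trig_term q (x $ j))" for p q
    using trig_coeff_prod_sums expectation_trig_term_pair by (cases p; cases q) simp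
  have "integrable M (\<lambda>x. trig_term p (x $ i) * trig_term q (x $ j))" for p q
    using integrable_trig_poly_pair[of "[p]" i "[q]" j] by simp
  then have expectation_eq: "expectation (\<lambda>x. trig_poly L1 (x $ i) * trig_poly L2 (x $ j))
      = (\<Sum>p\<leftarrow>L1. \<Sum>q\<leftarrow>L2. expectation (\<lambda>x. trig_term p (x $ i) * trig_term q (x $ j)))"
    unfolding trig_poly_def sum_list_mult_sum_list by (simp add: integral_sum_list)
  have coeff_eq: "k * trig_poly_coeff n L1 * trig_poly_coeff n L2
      = (\<Sum>p\<leftarrow>L1. \<Sum>q\<leftarrow>L2. k * trig_coeff n p * trig_coeff n q)" for k n
    by (simp only: trig_poly_coeff_def mult.assoc sum_list_mult_sum_list) (simp add: sum_list_const_mult)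
  show ?thesis
    unfolding expectation_eq coeff_eq by (intro sums_sum_list term_sums)
qed

lemma additive_trig_poly_sq_sums:
  fixes Ls :: "'d \<Rightarrow> (real \<times> real \<times> real) list"
  shows "(\<lambda>n. quad_form (hadamard_pow (second_moment M) n) (\<chi> i. trig_poly_coeff n (Ls i)) / fact n)
          sums expectation (\<lambda>x. (\<Sum>i\<in>UNIV. trig_poly (Ls i) (x $ i))\<^sup>2)"
proof -
  have expectation_eq: "expectation (\<lambda>x. (\<Sum>i\<in>UNIV. trig_poly (Ls i) (x $ i))\<^sup>2)
      = (\<Sum>i\<in>UNIV. \<Sum>j\<in>UNIV. expectation (\<lambda>x. trig_poly (Ls i) (x $ i) * trig_poly (Ls j) (x $ j)))"
    by (simp add: power2_eq_square sum_product integrable_trig_poly_pair)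
  have coeff_eq: "quad_form (hadamard_pow (second_moment M) n) (\<chi> i. trig_poly_coeff n (Ls i)) / fact n
      = (\<Sum>i\<in>UNIV. \<Sum>j\<in>UNIV. second_moment M i j ^ n / fact n * trig_poly_coeff n (Ls i) * trig_poly_coeff n (Ls j))"
    for n
    unfolding quad_form_def hadamard_pow_def sum_divide_distrib by (intro sum.cong refl) (simp add: ac_simps)
  show ?thesis
    unfolding expectation_eq coeff_eq by (intro sums_sum trig_poly_pair_sums)
qed

end

section \<open>Comparison of second moments\<close>

lemma quad_form_hadamard_pow_second_moment_nonneg:
  fixes M :: "(real ^ 'd::finite) measure"
  assumes integrable: "\<And>i j. integrable M (\<lambda>x. x $ i * x $ j)"
  shows "0 \<le> quad_form (hadamard_pow (second_moment M) n) v"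
proof (induction n arbitrary: v)
  case 0
  have "quad_form (hadamard_pow (second_moment M) 0) v = (\<Sum>i\<in>UNIV. v $ i)\<^sup>2"
    by (simp add: quad_form_def hadamard_pow_def power2_eq_square sum_product)
  then show ?case
    by simp
next
  case (Suc n)
  \<comment> \<open>Schur product theorem: with \<open>w x = (v\<^sub>i x\<^sub>i)\<^sub>i\<close>, the form of the \<open>(n+1)\<close>-st power is the mean
    of the form of the \<open>n\<close>-th power evaluated at \<open>w x\<close>.\<close>
  let ?A = "hadamard_pow (second_moment M) n"
  have int: "integrable M (\<lambda>x. (v $ i * ?A i j * v $ j) * (x $ i * x $ j))" for i j
    using integrable by simp
  have "(\<integral>x. quad_form ?A (\<chi> i. v $ i * x $ i) \<partial>M)
      = (\<integral>x. (\<Sum>i\<in>UNIV. \<Sum>j\<in>UNIV. (v $ i * ?A i j * v $ j) * (x $ i * x $ j)) \<partial>M)"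
    unfolding quad_form_def by (intro Bochner_Integration.integral_cong refl sum.cong) (simp_all add: ac_simps)
  also have "\<dots> = (\<Sum>i\<in>UNIV. \<Sum>j\<in>UNIV. (v $ i * ?A i j * v $ j) * second_moment M i j)"
    using int by (simp add: second_moment_def)
  also have "\<dots> = quad_form (hadamard_pow (second_moment M) (Suc n)) v"
    unfolding quad_form_def hadamard_pow_def by (intro sum.cong refl) (simp add: ac_simps)
  finally have eq: "quad_form (hadamard_pow (second_moment M) (Suc n)) v
      = (\<integral>x. quad_form ?A (\<chi> i. v $ i * x $ i) \<partial>M)" ..
  show ?case
    unfolding eq using Suc.IH by (intro Bochner_Integration.integral_nonneg) auto
qed

lemma (in pairwise_gaussian) quad_form_hadamard_pow_nonneg:
  "0 \<le> quad_form (hadamard_pow (second_moment M) n) v"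
  using integrable_coordinate_mult by (rule quad_form_hadamard_pow_second_moment_nonneg)

lemma ratio0_le_ennreal_iff:
  assumes "0 \<le> a" "0 \<le> b" "0 \<le> c"
  shows "ratio0 (ennreal a) (ennreal b) \<le> ennreal c \<longleftrightarrow> a \<le> c * b"
proof (cases "a = 0 \<or> b = 0")
  case True
  with assms show ?thesis
    by (auto simp: ratio0_def top_unique)
next
  case False
  with assms have "a > 0" "b > 0"
    by auto
  then show ?thesis
    using assms by (simp add: ratio0_def divide_ennreal ennreal_le_iff pos_divide_le_eq)
qed

lemma power2_le_split:
  fixes a b \<delta> :: real
  assumes "\<delta> > 0"
  shows "a\<^sup>2 \<le> (1 + \<delta>) * b\<^sup>2 + (1 + 1 / \<delta>) * (a - b)\<^sup>2"
proof -
  have "0 \<le> (\<delta> * b - (a - b))\<^sup>2 / \<delta>"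
    using assms by simp
  also have "\<dots> = (1 + \<delta>) * b\<^sup>2 + (1 + 1 / \<delta>) * (a - b)\<^sup>2 - a\<^sup>2"
    using assms by (simp add: power2_eq_square field_simps)
  finally show ?thesis
    by simp
qed

lemma integral_sq_le_split:
  fixes f g :: "'a \<Rightarrow> real"
  assumes "integrable M (\<lambda>x. (f x)\<^sup>2)" "integrable M (\<lambda>x. (g x)\<^sup>2)" "integrable M (\<lambda>x. (f x - g x)\<^sup>2)"
    and "\<delta> > 0"
  shows "(\<integral>x. (f x)\<^sup>2 \<partial>M) \<le> (1 + \<delta>) * (\<integral>x. (g x)\<^sup>2 \<partial>M) + (1 + 1 / \<delta>) * (\<integral>x. (f x - g x)\<^sup>2 \<partial>M)"
    and "(\<integral>x. (g x)\<^sup>2 \<partial>M) \<le> (1 + \<delta>) * (\<integral>x. (f x)\<^sup>2 \<partial>M) + (1 + 1 / \<delta>) * (\<integral>x. (f x - g x)\<^sup>2 \<partial>M)"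
proof -
  have "(\<integral>x. (f x)\<^sup>2 \<partial>M) \<le> (\<integral>x. (1 + \<delta>) * (g x)\<^sup>2 + (1 + 1 / \<delta>) * (f x - g x)\<^sup>2 \<partial>M)"
    using assms power2_le_split by (intro integral_mono) auto
  then show "(\<integral>x. (f x)\<^sup>2 \<partial>M) \<le> (1 + \<delta>) * (\<integral>x. (g x)\<^sup>2 \<partial>M) + (1 + 1 / \<delta>) * (\<integral>x. (f x - g x)\<^sup>2 \<partial>M)"
    using assms by simp
  have "(\<integral>x. (g x)\<^sup>2 \<partial>M) \<le> (\<integral>x. (1 + \<delta>) * (f x)\<^sup>2 + (1 + 1 / \<delta>) * (f x - g x)\<^sup>2 \<partial>M)"
    using assms power2_le_split[of \<delta> "g _" "f _"] by (intro integral_mono) (auto simp: power2_commute)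
  then show "(\<integral>x. (g x)\<^sup>2 \<partial>M) \<le> (1 + \<delta>) * (\<integral>x. (f x)\<^sup>2 \<partial>M) + (1 + 1 / \<delta>) * (\<integral>x. (f x - g x)\<^sup>2 \<partial>M)"
    using assms by simp
qed

lemma le_mult_of_approx:
  fixes a a' c :: real
  assumes "\<And>\<delta> \<eta>. \<delta> > 0 \<Longrightarrow> \<eta> > 0 \<Longrightarrow> a' \<le> (1 + \<delta>)\<^sup>2 * c * a + (1 + 1 / \<delta>) * ((1 + \<delta>) * c + 1) * \<eta>"
  shows "a' \<le> c * a"
proof (rule tendsto_lowerbound)
  have approx: "a' \<le> (1 + \<delta>)\<^sup>2 * c * a" if "\<delta> > 0" for \<delta>
  proof (rule tendsto_lowerbound)
    show "((\<lambda>\<eta>. (1 + \<delta>)\<^sup>2 * c * a + (1 + 1 / \<delta>) * ((1 + \<delta>) * c + 1) * \<eta>) \<longlongrightarrow> (1 + \<delta>)\<^sup>2 * c * a) (at_right 0)"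
      by (auto intro!: tendsto_eq_intros)
    show "\<forall>\<^sub>F \<eta> in at_right 0. a' \<le> (1 + \<delta>)\<^sup>2 * c * a + (1 + 1 / \<delta>) * ((1 + \<delta>) * c + 1) * \<eta>"
      using eventually_at_right_less[of "0::real"] by eventually_elim (rule assms[OF that])
  qed simp
  show "\<forall>\<^sub>F \<delta> in at_right 0. a' \<le> (1 + \<delta>)\<^sup>2 * c * a"
    using eventually_at_right_less[of "0::real"] by eventually_elim (rule approx)
  show "((\<lambda>\<delta>. (1 + \<delta>)\<^sup>2 * c * a) \<longlongrightarrow> c * a) (at_right 0)"
    by (auto intro!: tendsto_eq_intros)
qed simp

context pairwise_gaussian
begin

lemma sq_integrable_of_nn_integral:
  assumes "u \<in> borel_measurable borel" and "(\<integral>\<^sup>+x. ennreal ((u (x $ i))\<^sup>2) \<partial>M) < \<top>"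
  shows "sq_integrable std_normal_distribution u"
proof -
  have [measurable]: "u \<in> borel_measurable borel"
    by (fact assms(1))
  have "integrable M (\<lambda>x. (u (x $ i))\<^sup>2)"
    using assms(2) by (intro integrableI_nonneg) auto
  then show ?thesis
    unfolding sq_integrable_def using integrable_coordinate_iff[of "\<lambda>y. (u y)\<^sup>2" i] by simp
qed

lemma additive_class_diff:
  assumes "f \<in> additive_class M" and "g \<in> additive_class M"
  obtains h where "\<And>i. sq_integrable std_normal_distribution (h i)"
    and "\<And>x. f x - g x = (\<Sum>i\<in>UNIV. h i (x $ i))"
proof -
  obtain fs gs where fs: "f = (\<lambda>x. \<Sum>i\<in>UNIV. fs i (x $ i))" "\<And>i. fs i \<in> borel_measurable borel"
      "\<And>i. (\<integral>\<^sup>+x. ennreal ((fs i (x $ i))\<^sup>2) \<partial>M) < \<top>"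
    and gs: "g = (\<lambda>x. \<Sum>i\<in>UNIV. gs i (x $ i))" "\<And>i. gs i \<in> borel_measurable borel"
      "\<And>i. (\<integral>\<^sup>+x. ennreal ((gs i (x $ i))\<^sup>2) \<partial>M) < \<top>"
    using assms unfolding additive_class_def by blast
  interpret std_normal: real_distribution std_normal_distribution
    by (rule real_dist_normal_dist)
  show ?thesis
  proof
    show "sq_integrable std_normal_distribution (\<lambda>y. fs i y - gs i y)" for i
      using fs(2,3) gs(2,3) by (intro std_normal.sq_integrable_diff sq_integrable_of_nn_integral)
    show "f x - g x = (\<Sum>i\<in>UNIV. fs i (x $ i) - gs i (x $ i))" for x
      unfolding fs gs by (simp add: sum_subtractf)
  qed
qed

lemma integrable_sq_additive:
  assumes "\<And>i. sq_integrable std_normal_distribution (h i)"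
  shows "integrable M (\<lambda>x. (\<Sum>i\<in>UNIV. h i (x $ i))\<^sup>2)"
    and "(\<integral>x. (\<Sum>i\<in>UNIV. h i (x $ i))\<^sup>2 \<partial>M) \<le> real CARD('d) * (\<Sum>i\<in>UNIV. \<integral>y. (h i y)\<^sup>2 \<partial>std_normal_distribution)"
proof -
  have [measurable]: "h i \<in> borel_measurable borel" for i
    using assms unfolding sq_integrable_def by auto
  have int: "integrable M (\<lambda>x. (h i (x $ i))\<^sup>2)" for i
    using assms integrable_coordinate_iff[of "\<lambda>y. (h i y)\<^sup>2" i] unfolding sq_integrable_def by simp
  have "(\<lambda>y. (h i y)\<^sup>2) \<in> borel_measurable borel" for i
    by measurable
  note integral_eq = integral_coordinate[OF this]
  have pointwise: "(\<Sum>i\<in>UNIV. h i (x $ i))\<^sup>2 \<le> real CARD('d) * (\<Sum>i\<in>UNIV. (h i (x $ i))\<^sup>2)" for x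
    using Cauchy_Schwarz_ineq_sum[of "\<lambda>i. h i (x $ i)" "\<lambda>_. 1" UNIV] by (simp add: mult.commute)
  show int_sq: "integrable M (\<lambda>x. (\<Sum>i\<in>UNIV. h i (x $ i))\<^sup>2)"
  proof (rule Bochner_Integration.integrable_bound)
    show "integrable M (\<lambda>x. real CARD('d) * (\<Sum>i\<in>UNIV. (h i (x $ i))\<^sup>2))"
      using int by auto
    show "AE x in M. norm ((\<Sum>i\<in>UNIV. h i (x $ i))\<^sup>2) \<le> norm (real CARD('d) * (\<Sum>i\<in>UNIV. (h i (x $ i))\<^sup>2))"
      using pointwise by (simp add: sum_nonneg)
  qed measurable
  have "(\<integral>x. (\<Sum>i\<in>UNIV. h i (x $ i))\<^sup>2 \<partial>M) \<le> (\<integral>x. real CARD('d) * (\<Sum>i\<in>UNIV. (h i (x $ i))\<^sup>2) \<partial>M)"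
    using int_sq int pointwise by (intro integral_mono) auto
  also have "\<dots> = real CARD('d) * (\<Sum>i\<in>UNIV. \<integral>y. (h i y)\<^sup>2 \<partial>std_normal_distribution)"
    using int by (simp add: integral_eq)
  finally show "(\<integral>x. (\<Sum>i\<in>UNIV. h i (x $ i))\<^sup>2 \<partial>M) \<le> real CARD('d) * (\<Sum>i\<in>UNIV. \<integral>y. (h i y)\<^sup>2 \<partial>std_normal_distribution)" .
qed

lemma nn_integral_sq_additive:
  assumes "\<And>i. sq_integrable std_normal_distribution (h i)"
  shows "(\<integral>\<^sup>+x. ennreal ((\<Sum>i\<in>UNIV. h i (x $ i))\<^sup>2) \<partial>M) = ennreal (\<integral>x. (\<Sum>i\<in>UNIV. h i (x $ i))\<^sup>2 \<partial>M)"
  using integrable_sq_additive(1)[OF assms] by (rule nn_integral_eq_integral) simp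

lemma integral_sq_additive_split:
  assumes h: "\<And>i. sq_integrable std_normal_distribution (h i)"
    and k: "\<And>i. sq_integrable std_normal_distribution (k i)"
    and err: "\<And>i. (\<integral>y. (h i y - k i y)\<^sup>2 \<partial>std_normal_distribution) \<le> \<epsilon>"
    and "\<delta> > 0"
  shows "(\<integral>x. (\<Sum>i\<in>UNIV. h i (x $ i))\<^sup>2 \<partial>M)
      \<le> (1 + \<delta>) * (\<integral>x. (\<Sum>i\<in>UNIV. k i (x $ i))\<^sup>2 \<partial>M) + (1 + 1 / \<delta>) * ((real CARD('d))\<^sup>2 * \<epsilon>)"
    and "(\<integral>x. (\<Sum>i\<in>UNIV. k i (x $ i))\<^sup>2 \<partial>M)
      \<le> (1 + \<delta>) * (\<integral>x. (\<Sum>i\<in>UNIV. h i (x $ i))\<^sup>2 \<partial>M) + (1 + 1 / \<delta>) * ((real CARD('d))\<^sup>2 * \<epsilon>)"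
proof -
  interpret std_normal: real_distribution std_normal_distribution
    by (rule real_dist_normal_dist)
  define D where "D i y = h i y - k i y" for i y
  have D: "sq_integrable std_normal_distribution (D i)" for i
    unfolding D_def using h k by (rule std_normal.sq_integrable_diff)
  have diff: "(\<Sum>i\<in>UNIV. h i (x $ i)) - (\<Sum>i\<in>UNIV. k i (x $ i)) = (\<Sum>i\<in>UNIV. D i (x $ i))" for x
    unfolding D_def by (simp add: sum_subtractf)
  have "(\<integral>x. (\<Sum>i\<in>UNIV. D i (x $ i))\<^sup>2 \<partial>M) \<le> real CARD('d) * (\<Sum>i\<in>UNIV. \<integral>y. (D i y)\<^sup>2 \<partial>std_normal_distribution)"
    by (rule integrable_sq_additive(2)[of D, OF D])
  also have "\<dots> \<le> real CARD('d) * (\<Sum>i\<in>(UNIV :: 'd set). \<epsilon>)"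
    using err unfolding D_def by (intro mult_left_mono sum_mono) auto
  finally have "(1 + 1 / \<delta>) * (\<integral>x. (\<Sum>i\<in>UNIV. D i (x $ i))\<^sup>2 \<partial>M) \<le> (1 + 1 / \<delta>) * ((real CARD('d))\<^sup>2 * \<epsilon>)"
    using \<open>\<delta> > 0\<close> by (intro mult_left_mono) (simp_all add: power2_eq_square mult.assoc)
  then show "(\<integral>x. (\<Sum>i\<in>UNIV. h i (x $ i))\<^sup>2 \<partial>M)
      \<le> (1 + \<delta>) * (\<integral>x. (\<Sum>i\<in>UNIV. k i (x $ i))\<^sup>2 \<partial>M) + (1 + 1 / \<delta>) * ((real CARD('d))\<^sup>2 * \<epsilon>)"
    and "(\<integral>x. (\<Sum>i\<in>UNIV. k i (x $ i))\<^sup>2 \<partial>M)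
      \<le> (1 + \<delta>) * (\<integral>x. (\<Sum>i\<in>UNIV. h i (x $ i))\<^sup>2 \<partial>M) + (1 + 1 / \<delta>) * ((real CARD('d))\<^sup>2 * \<epsilon>)"
    using integral_sq_le_split[of M "\<lambda>x. \<Sum>i\<in>UNIV. h i (x $ i)" "\<lambda>x. \<Sum>i\<in>UNIV. k i (x $ i)" \<delta>]
      integrable_sq_additive(1)[OF h] integrable_sq_additive(1)[OF k] integrable_sq_additive(1)[of D, OF D]
      \<open>\<delta> > 0\<close>
    unfolding diff by auto
qed

end

lemma integral_sq_additive_trig_le:
  assumes P: "pairwise_gaussian P" and Q: "pairwise_gaussian Q"
    and hadamard_le: "\<And>n v. quad_form (hadamard_pow (second_moment Q) n) v \<le> c * quad_form (hadamard_pow (second_moment P) n) v"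
  shows "(\<integral>x. (\<Sum>i\<in>UNIV. trig_poly (Ls i) (x $ i))\<^sup>2 \<partial>Q) \<le> c * (\<integral>x. (\<Sum>i\<in>UNIV. trig_poly (Ls i) (x $ i))\<^sup>2 \<partial>P)"
proof (rule sums_le)
  show "(\<lambda>n. quad_form (hadamard_pow (second_moment Q) n) (\<chi> i. trig_poly_coeff n (Ls i)) / fact n)
      sums (\<integral>x. (\<Sum>i\<in>UNIV. trig_poly (Ls i) (x $ i))\<^sup>2 \<partial>Q)"
    using Q by (rule pairwise_gaussian.additive_trig_poly_sq_sums)
  show "(\<lambda>n. c * (quad_form (hadamard_pow (second_moment P) n) (\<chi> i. trig_poly_coeff n (Ls i)) / fact n))
      sums (c * (\<integral>x. (\<Sum>i\<in>UNIV. trig_poly (Ls i) (x $ i))\<^sup>2 \<partial>P))"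
    using P by (intro sums_mult pairwise_gaussian.additive_trig_poly_sq_sums)
  show "quad_form (hadamard_pow (second_moment Q) n) (\<chi> i. trig_poly_coeff n (Ls i)) / fact n
      \<le> c * (quad_form (hadamard_pow (second_moment P) n) (\<chi> i. trig_poly_coeff n (Ls i)) / fact n)" for n
    using divide_right_mono[OF hadamard_le, of "fact n"] by simp
qed

lemma additive_sq_integral_le_of_trig_poly:
  fixes h :: "'d::finite \<Rightarrow> real \<Rightarrow> real"
  assumes P: "pairwise_gaussian P" and Q: "pairwise_gaussian Q" and "0 \<le> c"
    and trig_le: "\<And>Ls. (\<integral>x. (\<Sum>i\<in>UNIV. trig_poly (Ls i) (x $ i))\<^sup>2 \<partial>Q)
      \<le> c * (\<integral>x. (\<Sum>i\<in>UNIV. trig_poly (Ls i) (x $ i))\<^sup>2 \<partial>P)"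
    and h: "\<And>i. sq_integrable std_normal_distribution (h i)"
  shows "(\<integral>x. (\<Sum>i\<in>UNIV. h i (x $ i))\<^sup>2 \<partial>Q) \<le> c * (\<integral>x. (\<Sum>i\<in>UNIV. h i (x $ i))\<^sup>2 \<partial>P)"
proof (rule le_mult_of_approx)
  interpret std_normal: real_distribution std_normal_distribution
    by (rule real_dist_normal_dist)
  fix \<delta> \<eta> :: real
  assume "\<delta> > 0" "\<eta> > 0"
  define \<epsilon> where "\<epsilon> = \<eta> / (real CARD('d))\<^sup>2"
  have "\<forall>i. \<exists>L. (\<integral>y. (h i y - trig_poly L y)\<^sup>2 \<partial>std_normal_distribution) < \<epsilon>"
    using std_normal.trig_approximable_sq_integrable[OF h] \<open>\<eta> > 0\<close> unfolding trig_approximable_def \<epsilon>_def by simp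
  then obtain Ls where Ls: "\<And>i. (\<integral>y. (h i y - trig_poly (Ls i) y)\<^sup>2 \<partial>std_normal_distribution) \<le> \<epsilon>"
    by (metis less_imp_le)
  have "(real CARD('d))\<^sup>2 * \<epsilon> = \<eta>"
    unfolding \<epsilon>_def by simp
  note split = pairwise_gaussian.integral_sq_additive_split[where k="\<lambda>i. trig_poly (Ls i)",
      OF _ h std_normal.sq_integrable_trig_poly Ls \<open>\<delta> > 0\<close>, unfolded this]
  have "(\<integral>x. (\<Sum>i\<in>UNIV. h i (x $ i))\<^sup>2 \<partial>Q)
      \<le> (1 + \<delta>) * (c * (\<integral>x. (\<Sum>i\<in>UNIV. trig_poly (Ls i) (x $ i))\<^sup>2 \<partial>P)) + (1 + 1 / \<delta>) * \<eta>"
    using split(1)[OF Q] mult_left_mono[OF trig_le[of Ls], of "1 + \<delta>"] \<open>\<delta> > 0\<close> by linarith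
  also have "\<dots> \<le> (1 + \<delta>) * (c * ((1 + \<delta>) * (\<integral>x. (\<Sum>i\<in>UNIV. h i (x $ i))\<^sup>2 \<partial>P) + (1 + 1 / \<delta>) * \<eta>))
      + (1 + 1 / \<delta>) * \<eta>"
    using split(2)[OF P] \<open>0 \<le> c\<close> \<open>\<delta> > 0\<close> by (intro add_right_mono mult_left_mono) auto
  also have "\<dots> = (1 + \<delta>)\<^sup>2 * c * (\<integral>x. (\<Sum>i\<in>UNIV. h i (x $ i))\<^sup>2 \<partial>P) + (1 + 1 / \<delta>) * ((1 + \<delta>) * c + 1) * \<eta>"
    by (simp add: power2_eq_square algebra_simps add_divide_distrib)
  finally show "(\<integral>x. (\<Sum>i\<in>UNIV. h i (x $ i))\<^sup>2 \<partial>Q)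
      \<le> (1 + \<delta>)\<^sup>2 * c * (\<integral>x. (\<Sum>i\<in>UNIV. h i (x $ i))\<^sup>2 \<partial>P) + (1 + 1 / \<delta>) * ((1 + \<delta>) * c + 1) * \<eta>" .
qed

lemma tau_additive_class_le:
  assumes P: "pairwise_gaussian P" and Q: "pairwise_gaussian Q" and "0 \<le> c"
    and hadamard_le: "\<And>n v. quad_form (hadamard_pow (second_moment Q) n) v
      \<le> c * quad_form (hadamard_pow (second_moment P) n) v"
  shows "tau P Q (additive_class P) \<le> ennreal c"
  unfolding tau_def
proof (intro SUP_least)
  interpret P: pairwise_gaussian P
    by (fact P)
  interpret Q: pairwise_gaussian Q
    by (fact Q)
  fix f g
  assume "f \<in> additive_class P" "g \<in> additive_class P"
  then obtain h where h: "\<And>i. sq_integrable std_normal_distribution (h i)"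
    and fg: "\<And>x. f x - g x = (\<Sum>i\<in>UNIV. h i (x $ i))"
    by (rule P.additive_class_diff) blast
  have "(\<integral>x. (\<Sum>i\<in>UNIV. h i (x $ i))\<^sup>2 \<partial>Q) \<le> c * (\<integral>x. (\<Sum>i\<in>UNIV. h i (x $ i))\<^sup>2 \<partial>P)"
    using P Q \<open>0 \<le> c\<close> integral_sq_additive_trig_le[OF P Q hadamard_le] h
    by (rule additive_sq_integral_le_of_trig_poly)
  then show "ratio0 (\<integral>\<^sup>+x. ennreal ((f x - g x)\<^sup>2) \<partial>Q) (\<integral>\<^sup>+x. ennreal ((f x - g x)\<^sup>2) \<partial>P) \<le> ennreal c"
    unfolding fg P.nn_integral_sq_additive[OF h] Q.nn_integral_sq_additive[OF h]
    using \<open>0 \<le> c\<close> by (simp add: ratio0_le_ennreal_iff)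
qed

theorem mainTheorem5:
  fixes P Q :: "(real^'d::finite) measure"
  assumes "prob_space P" and "prob_space Q"
    and "sets P = sets borel" and "sets Q = sets borel"
    and "\<And>i. distributed P lborel (\<lambda>x. x$i) std_normal_density"
    and "\<And>i. distributed Q lborel (\<lambda>x. x$i) std_normal_density"
    and "\<And>i j. jointly_gaussian P (\<lambda>x. x$i) (\<lambda>x. x$j)"
    and "\<And>i j. jointly_gaussian Q (\<lambda>x. x$i) (\<lambda>x. x$j)"
  shows "tau P Q (additive_class P) \<le>
    (SUP n::nat. SUP v::real^'d.
       ratio0 (ennreal (quad_form (hadamard_pow (second_moment Q) n) v))
              (ennreal (quad_form (hadamard_pow (second_moment P) n) v)))"
    (is "_ \<le> ?C")
proof (cases "?C = \<top>")
  case False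
  have P: "pairwise_gaussian P" and Q: "pairwise_gaussian Q"
    using assms by (auto intro!: pairwise_gaussian.intro pairwise_gaussian_axioms.intro)
  obtain c where c: "?C = ennreal c" "0 \<le> c"
    using False by (cases ?C rule: ennreal_cases) auto
  have "ratio0 (ennreal (quad_form (hadamard_pow (second_moment Q) n) v))
      (ennreal (quad_form (hadamard_pow (second_moment P) n) v)) \<le> ennreal c" for n v
    unfolding c(1)[symmetric] by (rule SUP_upper2[where i=n]) (auto intro: SUP_upper)
  then have "quad_form (hadamard_pow (second_moment Q) n) v \<le> c * quad_form (hadamard_pow (second_moment P) n) v"
    for n v
    using pairwise_gaussian.quad_form_hadamard_pow_nonneg[OF P] pairwise_gaussian.quad_form_hadamard_pow_nonneg[OF Q]
      c(2) by (simp add: ratio0_le_ennreal_iff)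
  then have "tau P Q (additive_class P) \<le> ennreal c"
    by (rule tau_additive_class_le[OF P Q c(2)])
  with c(1) show ?thesis
    by simp
qed (metis top_greatest)

end
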